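(* Let $w_r \ge w_c \ge 2$ be integers and let $H_{\mathrm{reg}}$ be the bipartite graph constructed from $(w_c,w_r)$ as described in the context. Then the girth of $H_{\mathrm{reg}}$ is $8$, and the binary linear code whose parity-check matrix is the check-node-by-variable-node incidence matrix of $H_{\mathrm{reg}}$ has minimum distance $d_{\min} = 2^{w_c}$.
   Context: The graph $H_{\mathrm{reg}}$ is a bipartite graph between "variable nodes" and "check nodes", built as follows from integers $w_r \ge w_c \ge 2$. (1) Base tree $H_{\mathrm{base}}$: a root check node is adjacent to $w_r$ variable nodes $v_{1,0},\dots,v_{w_r,0}$. Each $v_{i,0}$ has $w_c-1$ further (child) check nodes, and each of these child check nodes has $w_r-1$ further (child) variable nodes. The $(w_c-1)(w_r-1)$ variable nodes below $v_{i,0}$ are labelled $v_{i,1},\dots,v_{i,(w_c-1)(w_r-1)}$, where for $k=1,\dots,w_c-1$ the nodes $v_{i,(k-1)(w_r-1)+1},\dots,v_{i,k(w_r-1)}$ are the children of the $k$-th child check node of $v_{i,0}$. These nodes $v_{i,j}$ with $j\ge 1$ are called last-layer variable nodes. (2) For each $j=1,\dots,(w_c-1)(w_r-1)$ add a new check node $c_j$ adjacent to $v_{1,j},v_{2,j},\dots,v_{w_r,j}$. Call the resulting graph $G_0$. (3) If $w_c \ge 3$, for $s=1,\dots,w_c-2$: let $G_s$ consist of $w_r$ disjoint copies of $G_{s-1}$, together with, for every last-layer variable node $u$ of $G_{s-1}$ (i.e. every variable node of $G_{s-1}$ coming from a last-layer variable node of some copy of $H_{\mathrm{base}}$), one new check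 node adjacent to the $w_r$ copies of $u$. Finally $H_{\mathrm{reg}} = G_{w_c-2}$. The girth of a graph is the length of its shortest cycle. The code associated with $H_{\mathrm{reg}}$ is the set of binary vectors indexed by variable nodes whose support meets every check node's neighbourhood in an even number of vertices; $d_{\min}$ is the minimum Hamming weight of a nonzero codeword. *)

theory Defs
  imports Main "HOL-Library.Extended_Nat"
begin

text \<open>Variable nodes: (copy indices, i, j), standing for v_{i,j} in the copy of H_base
  selected by the list of copy indices (most recent copy index first).\<close>
type_synonym vnode = "nat list \<times> nat \<times> nat"

text \<open>Root: root check of H_base; Child i k: k-th child check of v_{i,0};
  CJ j: check c_j added in step (2); Glue s i j: check added in step (3) at stage s for the
  last-layer variable node v_{i,j} of (a copy of) G_{s-1}.\<close>
datatype ckind = Root | Child nat nat | CJ nat | Glue nat nat nat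

type_synonym cnode = "nat list \<times> ckind"

type_synonym bgraph = "vnode set \<times> cnode set \<times> (vnode \<times> cnode) set"

definition G0 :: "nat \<Rightarrow> nat \<Rightarrow> bgraph" where
  "G0 wc wr =
    (let L = (wc - 1) * (wr - 1) in
     ({([], i, j) | i j. 1 \<le> i \<and> i \<le> wr \<and> j \<le> L},
      {([], Root)} \<union> {([], Child i k) | i k. 1 \<le> i \<and> i \<le> wr \<and> 1 \<le> k \<and> k \<le> wc - 1}
        \<union> {([], CJ j) | j. 1 \<le> j \<and> j \<le> L},
      {(([], i, 0), ([], Root)) | i. 1 \<le> i \<and> i \<le> wr}
      \<union> {(([], i, 0), ([], Child i k)) | i k. 1 \<le> i \<and> i \<le> wr \<and> 1 \<le> k \<and> k \<le> wc - 1}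
      \<union> {(([], i, j), ([], Child i k)) | i j k. 1 \<le> i \<and> i \<le> wr \<and> 1 \<le> k \<and> k \<le> wc - 1
             \<and> (k - 1) * (wr - 1) + 1 \<le> j \<and> j \<le> k * (wr - 1)}
      \<union> {(([], i, j), ([], CJ j)) | i j. 1 \<le> i \<and> i \<le> wr \<and> 1 \<le> j \<and> j \<le> L}))"

text \<open>G_s for s \<ge> 1: w_r disjoint copies of G_{s-1} (copy t prepends t to the copy list),
  plus one new check per last-layer variable node u of G_{s-1}, adjacent to the w_r copies of u.\<close>
fun Gs :: "nat \<Rightarrow> nat \<Rightarrow> nat \<Rightarrow> bgraph" where
  "Gs wc wr 0 = G0 wc wr"
| "Gs wc wr (Suc s) =
    (case Gs wc wr s of (V, C, E) \<Rightarrow>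
      ({(t # cs, i, j) | t cs i j. 1 \<le> t \<and> t \<le> wr \<and> (cs, i, j) \<in> V},
       {(t # ds, \<kappa>) | t ds \<kappa>. 1 \<le> t \<and> t \<le> wr \<and> (ds, \<kappa>) \<in> C}
         \<union> {(cs, Glue (Suc s) i j) | cs i j. (cs, i, j) \<in> V \<and> 1 \<le> j},
       {((t # cs, i, j), (t # ds, \<kappa>)) | t cs i j ds \<kappa>. 1 \<le> t \<and> t \<le> wr
           \<and> ((cs, i, j), (ds, \<kappa>)) \<in> E}
         \<union> {((t # cs, i, j), (cs, Glue (Suc s) i j)) | t cs i j. 1 \<le> t \<and> t \<le> wr
           \<and> (cs, i, j) \<in> V \<and> 1 \<le> j}))"

definition Hreg :: "nat \<Rightarrow> nat \<Rightarrow> bgraph" where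
  "Hreg wc wr = Gs wc wr (wc - 2)"

fun badj :: "bgraph \<Rightarrow> (vnode + cnode) \<Rightarrow> (vnode + cnode) \<Rightarrow> bool" where
  "badj (V, C, E) (Inl v) (Inr c) \<longleftrightarrow> v \<in> V \<and> c \<in> C \<and> (v, c) \<in> E"
| "badj (V, C, E) (Inr c) (Inl v) \<longleftrightarrow> v \<in> V \<and> c \<in> C \<and> (v, c) \<in> E"
| "badj _ _ _ \<longleftrightarrow> False"

definition is_cycle :: "bgraph \<Rightarrow> (vnode + cnode) list \<Rightarrow> bool" where
  "is_cycle G xs \<longleftrightarrow> length xs \<ge> 3 \<and> distinct xs \<and>
     (\<forall>i < length xs. badj G (xs ! i) (xs ! ((i + 1) mod length xs)))"

definition girth :: "bgraph \<Rightarrow> enat" where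
  "girth G = (INF xs \<in> {xs. is_cycle G xs}. enat (length xs))"

text \<open>Codewords, as supports S \<subseteq> V of binary vectors: every check sees an even number of
  vertices of S.\<close>
definition is_codeword :: "bgraph \<Rightarrow> vnode set \<Rightarrow> bool" where
  "is_codeword G S \<longleftrightarrow> (case G of (V, C, E) \<Rightarrow>
     S \<subseteq> V \<and> (\<forall>c \<in> C. even (card {v \<in> S. (v, c) \<in> E})))"

definition dmin :: "bgraph \<Rightarrow> enat" where
  "dmin G = (INF S \<in> {S. is_codeword G S \<and> S \<noteq> {}}. enat (card S))"

end

(* G_{s+1} consists of w_r copies of G_s together with one glue check for every last-layer
   variable node u, adjacent exactly to the w_r copies of u.

   Girth: a variable node has only one glue check, so in a 4- or 6-cycle through a glue check
   all other checks are ordinary checks, which stay inside one copy; but the glue check joins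
   two different copies. Cycles without glue checks live in one copy. So no G_s has 4- or
   6-cycles (G_0 has none either), and since the graph is bipartite its girth is at least 8.
   The 8-cycle v_{1,0}, v_{1,1}, v_{2,1}, v_{2,0} of G_0 survives in the first copy.

   Minimum distance: the restriction of a codeword of G_{s+1} to one copy is a codeword of G_s.
   Inductively every nonzero codeword of G_s has weight at least 2^(s+2) and contains a
   last-layer node u (for G_0 this is checked directly). In G_{s+1} the glue check of (a copy
   of) u forces a second copy to carry a nonzero codeword, so the weight doubles. Conversely,
   two copies of a codeword of G_s form a codeword of G_{s+1}, and G_0 has a codeword of
   weight 4: a 2x2 grid of variable nodes in which each check sees a full row, a full column
   or nothing. *)

theory Submission
  imports Defs
begin

section \<open>Short cycles in bipartite graphs\<close>

definition no_4cycle :: "('v \<times> 'c) set \<Rightarrow> bool" where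
  "no_4cycle E \<longleftrightarrow> (\<nexists>v1 v2 c1 c2. v1 \<noteq> v2 \<and> c1 \<noteq> c2 \<and>
     {(v1, c1), (v2, c1), (v1, c2), (v2, c2)} \<subseteq> E)"

definition no_6cycle :: "('v \<times> 'c) set \<Rightarrow> bool" where
  "no_6cycle E \<longleftrightarrow> (\<nexists>v1 v2 v3 c1 c2 c3. distinct [v1, v2, v3] \<and> distinct [c1, c2, c3] \<and>
     {(v1, c1), (v2, c1), (v2, c2), (v3, c2), (v3, c3), (v1, c3)} \<subseteq> E)"

lemma badj_isl: "badj G x y \<Longrightarrow> isl x \<noteq> isl y"
  by (cases G; cases x; cases y) auto

lemma is_cycle_even_length:
  assumes "is_cycle G xs" shows "even (length xs)"
proof -
  let ?n = "length xs"
  have n: "3 \<le> ?n" using assms by (simp add: is_cycle_def)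
  have alt: "isl (xs ! i) \<noteq> isl (xs ! ((i + 1) mod ?n))" if "i < ?n" for i
    using assms that by (intro badj_isl[of G]) (simp add: is_cycle_def)
  have parity: "isl (xs ! i) \<longleftrightarrow> (isl (xs ! 0) \<longleftrightarrow> even i)" if "i < ?n" for i
    using that
  proof (induction i)
    case (Suc i)
    then show ?case using alt[of i] by auto
  qed simp
  have "?n - 1 + 1 = ?n" using n by simp
  then have "(?n - 1 + 1) mod ?n = 0" by simp
  then have "isl (xs ! (?n - 1)) \<noteq> isl (xs ! 0)"
    using alt[of "?n - 1"] n by simp
  moreover have "?n - 1 < ?n" using n by simp
  ultimately have "odd (?n - 1)" using parity by blast
  then show ?thesis using n by presburger
qed

lemma no_4cycle_no_square:
  assumes "no_4cycle E" "isl a" "distinct [a, b, c, d]"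
    and "badj (V, C, E) a b" "badj (V, C, E) b c" "badj (V, C, E) c d" "badj (V, C, E) d a"
  shows False
proof -
  have "\<not> isl b" "isl c" "\<not> isl d" using badj_isl assms(2,4-6) by metis+
  then obtain v1 c1 v2 c2 where "a = Inl v1" "b = Inr c1" "c = Inl v2" "d = Inr c2"
    using assms(2) by (cases a; cases b; cases c; cases d) auto
  with assms(3-7) have "v1 \<noteq> v2" "c1 \<noteq> c2" "{(v1, c1), (v2, c1), (v1, c2), (v2, c2)} \<subseteq> E"
    by auto
  with assms(1) show False unfolding no_4cycle_def by blast
qed

lemma no_6cycle_no_hexagon:
  assumes "no_6cycle E" "isl a" "distinct [a, b, c, d, e, f]"
    and "badj (V, C, E) a b" "badj (V, C, E) b c" "badj (V, C, E) c d" "badj (V, C, E) d e"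
      "badj (V, C, E) e f" "badj (V, C, E) f a"
  shows False
proof -
  have "\<not> isl b" "isl c" "\<not> isl d" "isl e" "\<not> isl f" using badj_isl assms(2,4-8) by metis+
  then obtain v1 c1 v2 c2 v3 c3 where "a = Inl v1" "b = Inr c1" "c = Inl v2" "d = Inr c2" "e = Inl v3" "f = Inr c3"
    using assms(2) by (cases a; cases b; cases c; cases d; cases e; cases f) auto
  with assms(3-9) have "distinct [v1, v2, v3]" "distinct [c1, c2, c3]"
    "{(v1, c1), (v2, c1), (v2, c2), (v3, c2), (v3, c3), (v1, c3)} \<subseteq> E"
    by auto
  with assms(1) show False unfolding no_6cycle_def by blast
qed

lemma cycle_length_ge_8:
  assumes cyc: "is_cycle (V, C, E) xs" and "no_4cycle E" "no_6cycle E"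
  shows "8 \<le> length xs"
proof (rule ccontr)
  assume "\<not> 8 \<le> length xs"
  moreover have "3 \<le> length xs" "even (length xs)"
    using cyc is_cycle_even_length by (auto simp: is_cycle_def)
  ultimately have "length xs = 4 \<or> length xs = 6" by presburger
  moreover have adj: "badj (V, C, E) (xs ! i) (xs ! ((i + 1) mod length xs))" if "i < length xs" for i
    using cyc that by (simp add: is_cycle_def)
  moreover have "distinct xs" using cyc by (simp add: is_cycle_def)
  ultimately show False
  proof (elim disjE)
    assume "length xs = 4"
    then obtain a b c d where xs: "xs = [a, b, c, d]" by (auto simp: length_Suc_conv numeral_eq_Suc)
    have ab: "badj (V, C, E) a b" "badj (V, C, E) b c" "badj (V, C, E) c d" "badj (V, C, E) d a"
      using adj[of 0] adj[of 1] adj[of 2] adj[of 3] by (simp_all add: xs)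
    have "distinct [a, b, c, d]" "distinct [b, c, d, a]" using \<open>distinct xs\<close> unfolding xs by auto
    then show False
      using no_4cycle_no_square[OF assms(2) _ _ ab] no_4cycle_no_square[OF assms(2) _ _ ab(2-4,1)]
        badj_isl[OF ab(1)] by blast
  next
    assume "length xs = 6"
    then obtain a b c d e f where xs: "xs = [a, b, c, d, e, f]"
      by (auto simp: length_Suc_conv numeral_eq_Suc)
    have ab: "badj (V, C, E) a b" "badj (V, C, E) b c" "badj (V, C, E) c d" "badj (V, C, E) d e"
      "badj (V, C, E) e f" "badj (V, C, E) f a"
      using adj[of 0] adj[of 1] adj[of 2] adj[of 3] adj[of 4] adj[of 5] by (simp_all add: xs)
    have "distinct [a, b, c, d, e, f]" "distinct [b, c, d, e, f, a]"
      using \<open>distinct xs\<close> unfolding xs by auto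
    then show False
      using no_6cycle_no_hexagon[OF assms(3) _ _ ab] no_6cycle_no_hexagon[OF assms(3) _ _ ab(2-6,1)]
        badj_isl[OF ab(1)] by blast
  qed
qed

lemma is_cycle_map:
  assumes "is_cycle G xs" "inj f" "\<And>x y. badj G x y \<Longrightarrow> badj G' (f x) (f y)"
  shows "is_cycle G' (map f xs)"
proof -
  have "badj G' (map f xs ! i) (map f xs ! ((i + 1) mod length xs))" if "i < length xs" for i
  proof -
    have "0 < length xs" using that by linarith
    then have "(i + 1) mod length xs < length xs" by simp
    then show ?thesis using that assms(1,3) by (simp add: is_cycle_def)
  qed
  then show ?thesis
    using assms(1) inj_on_subset[OF assms(2) subset_UNIV] by (simp add: is_cycle_def distinct_map)
qed

lemma girth_eqI:
  assumes "\<And>xs. is_cycle G xs \<Longrightarrow> k \<le> length xs" "is_cycle G ys" "length ys = k"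
  shows "girth G = enat k"
  unfolding girth_def
proof (rule antisym)
  show "(INF xs \<in> {xs. is_cycle G xs}. enat (length xs)) \<le> enat k"
    using assms(2,3) by (metis INF_lower mem_Collect_eq)
  show "enat k \<le> (INF xs \<in> {xs. is_cycle G xs}. enat (length xs))"
    by (rule INF_greatest) (use assms(1) in auto)
qed

section \<open>Codewords\<close>

lemma is_codeword_iff:
  "is_codeword (V, C, E) S \<longleftrightarrow> S \<subseteq> V \<and> (\<forall>c\<in>C. even (card {v \<in> S. (v, c) \<in> E}))"
  by (simp add: is_codeword_def)

lemma codeword_other_neighbour:
  assumes "is_codeword (V, C, E) S" "finite V" "c \<in> C" "x \<in> S" "(x, c) \<in> E"
  obtains y where "y \<in> S" "y \<noteq> x" "(y, c) \<in> E"
proof -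
  let ?N = "{v \<in> S. (v, c) \<in> E}"
  have "finite ?N" "even (card ?N)"
    using assms(1-3) finite_subset by (fastforce simp: is_codeword_iff)+
  moreover have "x \<in> ?N" using assms(4,5) by simp
  ultimately have "?N \<noteq> {x}" by auto
  with \<open>x \<in> ?N\<close> show ?thesis using that by blast
qed

lemma even_card_grid_neighbours:
  assumes I: "finite I" "even (card I)" and g: "inj_on g (I \<times> I)"
    and inj_row: "inj_on row I" and inj_col: "inj_on col I" and disj: "row ` I \<inter> col ` I = {}"
    and adj: "\<And>a b. a \<in> I \<Longrightarrow> b \<in> I \<Longrightarrow> (g (a, b), c) \<in> E \<longleftrightarrow> c = row a \<or> c = col b"
  shows "even (card {v \<in> g ` (I \<times> I). (v, c) \<in> E})"
proof -
  let ?P = "{p \<in> I \<times> I. c = row (fst p) \<or> c = col (snd p)}"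
  have row_ne_col: "row a \<noteq> col b" if "a \<in> I" "b \<in> I" for a b using disj that by blast
  have "{v \<in> g ` (I \<times> I). (v, c) \<in> E} = g ` ?P" using adj by auto
  then have card: "card {v \<in> g ` (I \<times> I). (v, c) \<in> E} = card ?P"
    using card_image[OF inj_on_subset[OF g]] by (metis (no_types, lifting) mem_Collect_eq subsetI)
  consider (row) a where "a \<in> I" "c = row a" | (col) b where "b \<in> I" "c = col b"
    | (none) "c \<notin> row ` I" "c \<notin> col ` I" by blast
  then have "?P = {} \<or> card ?P = card I"
  proof cases
    case row
    then have "?P = {a} \<times> I" using row_ne_col by (auto dest: inj_onD[OF inj_row])
    then show ?thesis by (simp add: card_cartesian_product)
  next
    case col
    then have "?P = I \<times> {b}" using row_ne_col[THEN not_sym] by (auto dest: inj_onD[OF inj_col])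
    then show ?thesis by (simp add: card_cartesian_product)
  next
    case none
    then have "?P = {}" by auto
    then show ?thesis ..
  qed
  then have "even (card ?P)" using I(2) by (elim disjE) (simp_all only: card.empty even_zero)
  then show ?thesis using card by simp
qed

lemma dmin_eqI:
  assumes "\<And>S. is_codeword G S \<Longrightarrow> S \<noteq> {} \<Longrightarrow> d \<le> card S"
    and "is_codeword G T" "card T = d" "0 < d"
  shows "dmin G = enat d"
  unfolding dmin_def
proof (rule antisym)
  show "(INF S \<in> {S. is_codeword G S \<and> S \<noteq> {}}. enat (card S)) \<le> enat d"
    using assms(2-4) by (metis (mono_tags, lifting) INF_lower card.empty less_irrefl mem_Collect_eq)
  show "enat d \<le> (INF S \<in> {S. is_codeword G S \<and> S \<noteq> {}}. enat (card S))"
    by (rule INF_greatest) (use assms(1) in auto)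
qed

section \<open>Lifting a graph to glued copies\<close>

definition copy :: "nat \<Rightarrow> nat list \<times> 'a \<Rightarrow> nat list \<times> 'a" where
  "copy t x = (t # fst x, snd x)"

definition copy_index :: "nat list \<times> 'a \<Rightarrow> nat" where
  "copy_index x = hd (fst x)"

definition glue_check :: "nat \<Rightarrow> vnode \<Rightarrow> cnode" where
  "glue_check n v = (fst v, Glue n (fst (snd v)) (snd (snd v)))"

definition last_layer :: "vnode \<Rightarrow> bool" where
  "last_layer v \<longleftrightarrow> 1 \<le> snd (snd v)"

lemma copy_Pair: "copy t (cs, x) = (t # cs, x)"
  by (simp add: copy_def)

lemma glue_check_Pair: "glue_check n (cs, i, j) = (cs, Glue n i j)"
  by (simp add: glue_check_def)

lemma copy_index_copy [simp]: "copy_index (copy t x) = t"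
  by (simp add: copy_index_def copy_def)

lemma last_layer_copy [simp]: "last_layer (copy t v) = last_layer v"
  by (simp add: last_layer_def copy_def)

lemma copy_eq_iff [simp]: "copy t x = copy t' x' \<longleftrightarrow> t = t' \<and> x = x'"
  by (auto simp: copy_def prod_eq_iff)

lemma glue_check_eq_iff [simp]: "glue_check n v = glue_check n v' \<longleftrightarrow> v = v'"
  by (auto simp: glue_check_def prod_eq_iff)

lemma card_copy_image [simp]: "card (copy t ` A) = card A"
  by (rule card_image) (simp add: inj_on_def)

lemma copy_images_disjoint: "t \<noteq> t' \<Longrightarrow> copy t ` A \<inter> copy t' ` B = {}"
  by auto

lemma card_copy_images:
  "finite A \<Longrightarrow> finite B \<Longrightarrow> t \<noteq> t' \<Longrightarrow> card (copy t ` A \<union> copy t' ` B) = card A + card B"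
  by (simp add: card_Un_disjoint copy_images_disjoint)

lemma Cons_in_copy_image_iff: "(t # cs, x) \<in> copy t' ` A \<longleftrightarrow> t = t' \<and> (cs, x) \<in> A"
proof
  assume "(t # cs, x) \<in> copy t' ` A"
  then obtain y where "y \<in> A" "(t # cs, x) = copy t' y" by blast
  then show "t = t' \<and> (cs, x) \<in> A" by (cases y) (simp add: copy_Pair)
qed (metis copy_Pair image_eqI)

lemma Glue_in_glue_check_image_iff:
  "(cs, Glue n i j) \<in> glue_check n ` A \<longleftrightarrow> (cs, i, j) \<in> A"
proof
  assume "(cs, Glue n i j) \<in> glue_check n ` A"
  then obtain y where "y \<in> A" "(cs, Glue n i j) = glue_check n y" by blast
  then show "(cs, i, j) \<in> A" by (cases y) (simp add: glue_check_Pair)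
qed (metis glue_check_Pair image_eqI)

definition lift :: "nat \<Rightarrow> nat \<Rightarrow> bgraph \<Rightarrow> bgraph" where
  "lift wr n G = (case G of (V, C, E) \<Rightarrow>
     ((\<Union>t\<in>{1..wr}. copy t ` V),
      (\<Union>t\<in>{1..wr}. copy t ` C) \<union> glue_check n ` {v \<in> V. last_layer v},
      {(copy t v, copy t c) | t v c. t \<in> {1..wr} \<and> (v, c) \<in> E}
        \<union> {(copy t v, glue_check n v) | t v. t \<in> {1..wr} \<and> v \<in> V \<and> last_layer v}))"

lemma Gs_Suc_lift: "Gs wc wr (Suc s) = lift wr (Suc s) (Gs wc wr s)"
proof -
  obtain V C E where G: "Gs wc wr s = (V, C, E)" by (cases "Gs wc wr s")
  note simps = G lift_def last_layer_def copy_Pair glue_check_Pair Cons_in_copy_image_iff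
    Glue_in_glue_check_image_iff
  have "fst (Gs wc wr (Suc s)) = fst (lift wr (Suc s) (V, C, E))"
    by (auto simp: simps)
  moreover have "fst (snd (Gs wc wr (Suc s))) = fst (snd (lift wr (Suc s) (V, C, E)))"
    by (auto simp: simps)
  moreover have "snd (snd (Gs wc wr (Suc s))) = snd (snd (lift wr (Suc s) (V, C, E)))"
    by (auto simp: simps)
  ultimately show ?thesis by (simp add: G prod_eq_iff)
qed

locale lift_step =
  fixes wr n :: nat and V :: "vnode set" and C :: "cnode set" and E :: "(vnode \<times> cnode) set"
  assumes finite_V: "finite V"
    and edges_subset: "E \<subseteq> V \<times> C"
    and glue_fresh: "(ds, Glue m i j) \<in> C \<Longrightarrow> m < n"
      \<comment> \<open>rather than \<open>m \<noteq> n\<close>, so that it is inherited by the lifted graph\<close>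
begin

definition "V' = (\<Union>t\<in>{1..wr}. copy t ` V)"
definition "C' = (\<Union>t\<in>{1..wr}. copy t ` C) \<union> glue_check n ` {v \<in> V. last_layer v}"
definition "E' = {(copy t v, copy t c) | t v c. t \<in> {1..wr} \<and> (v, c) \<in> E}
  \<union> {(copy t v, glue_check n v) | t v. t \<in> {1..wr} \<and> v \<in> V \<and> last_layer v}"

lemma lift_eq: "lift wr n (V, C, E) = (V', C', E')"
  by (simp add: lift_def V'_def C'_def E'_def)

lemma copy_ne_glue_check: "d \<in> C \<Longrightarrow> copy t d \<noteq> glue_check n v"
  using glue_fresh by (cases d) (fastforce simp: copy_def glue_check_def)

lemma lifted_edgeE:
  assumes "(v, c) \<in> E'"
  obtains (copied) t u d where "t \<in> {1..wr}" "v = copy t u" "c = copy t d" "(u, d) \<in> E"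
    | (glued) t u where "t \<in> {1..wr}" "v = copy t u" "c = glue_check n u" "u \<in> V" "last_layer u"
  using assms unfolding E'_def Un_iff mem_Collect_eq prod.inject by blast

lemma lifted_copy_edge: "t \<in> {1..wr} \<Longrightarrow> (u, d) \<in> E \<Longrightarrow> (copy t u, copy t d) \<in> E'"
  unfolding E'_def by (intro UnI1 CollectI exI[of _ t] exI[of _ u] exI[of _ d]) simp

lemma lifted_glue_edge: "t \<in> {1..wr} \<Longrightarrow> u \<in> V \<Longrightarrow> last_layer u \<Longrightarrow> (copy t u, glue_check n u) \<in> E'"
  unfolding E'_def by (intro UnI2 CollectI exI[of _ t] exI[of _ u]) simp

lemma lifted_edges_subset: "E' \<subseteq> V' \<times> C'"
proof
  fix e assume "e \<in> E'"
  then obtain v c where e: "e = (v, c)" "(v, c) \<in> E'" by (cases e) auto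
  from e(2) show "e \<in> V' \<times> C'"
  proof (cases rule: lifted_edgeE)
    case (copied t u d)
    then have "u \<in> V" "d \<in> C" using edges_subset by auto
    then show ?thesis using e(1) copied by (auto simp: V'_def C'_def)
  next
    case (glued t u)
    then show ?thesis using e(1) by (auto simp: V'_def C'_def)
  qed
qed

lemma lifted_glue_tags: "(ds, Glue m i j) \<in> C' \<Longrightarrow> m \<le> n"
  using glue_fresh by (fastforce simp: C'_def copy_def glue_check_def)

lemma finite_lifted_vars: "finite V'"
  using finite_V by (simp add: V'_def)

lemma copy_in_lifted_vars_iff: "copy t v \<in> V' \<longleftrightarrow> t \<in> {1..wr} \<and> v \<in> V"
  by (auto simp: V'_def)

lemma lifted_varsE:
  assumes "w \<in> V'" obtains t v where "t \<in> {1..wr}" "v \<in> V" "w = copy t v"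
  using assms by (auto simp: V'_def)

lemma copy_check_in_lifted_checks: "t \<in> {1..wr} \<Longrightarrow> d \<in> C \<Longrightarrow> copy t d \<in> C'"
  by (auto simp: C'_def)

lemma glue_check_in_lifted_checks: "u \<in> V \<Longrightarrow> last_layer u \<Longrightarrow> glue_check n u \<in> C'"
  by (auto simp: C'_def)

lemma lifted_edge_glueD:
  assumes "(v, glue_check n u) \<in> E'" shows "\<exists>t. v = copy t u"
  using assms
proof (cases rule: lifted_edgeE)
  case (copied t w d)
  then have "d \<in> C" using edges_subset by blast
  then show ?thesis using copied(3) copy_ne_glue_check by metis
qed simp

lemma lifted_edge_copyD:
  assumes "(v, c) \<in> E'" "c \<notin> range (glue_check n)"
  shows "\<exists>t u d. v = copy t u \<and> c = copy t d \<and> (u, d) \<in> E"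
  using assms(1)
proof (cases rule: lifted_edgeE)
  case (glued t u)
  with assms(2) show ?thesis by simp
qed blast

lemma lifted_copy_edge_iff:
  assumes "copy t d \<notin> range (glue_check n)"
  shows "(copy t u, copy t d) \<in> E' \<longleftrightarrow> t \<in> {1..wr} \<and> (u, d) \<in> E"
proof
  assume "(copy t u, copy t d) \<in> E'"
  then show "t \<in> {1..wr} \<and> (u, d) \<in> E"
  proof (cases rule: lifted_edgeE)
    case (glued t' u')
    with assms show ?thesis by simp
  qed simp
qed (unfold E'_def Un_iff mem_Collect_eq prod.inject, blast)

lemma lifted_edge_from_copy:
  "(copy t u, c) \<in> E' \<Longrightarrow> c \<notin> range (glue_check n) \<Longrightarrow> \<exists>d. c = copy t d \<and> (u, d) \<in> E"
  using lifted_edge_copyD by fastforce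

lemma lifted_edge_to_copy:
  "(v, copy t d) \<in> E' \<Longrightarrow> copy t d \<notin> range (glue_check n) \<Longrightarrow> \<exists>u. v = copy t u \<and> (u, d) \<in> E"
  using lifted_edge_copyD by fastforce

lemma lifted_glue_check_unique:
  "(v, glue_check n u) \<in> E' \<Longrightarrow> (v, glue_check n u') \<in> E' \<Longrightarrow> u = u'"
  by (metis copy_eq_iff lifted_edge_glueD)

lemma lifted_copy_check_same_copy:
  assumes "(v, c) \<in> E'" "(v', c) \<in> E'" "c \<notin> range (glue_check n)"
  shows "copy_index v = copy_index v'"
  using lifted_edge_copyD[OF assms(1,3)] lifted_edge_copyD[OF assms(2,3)] by auto

text \<open>A glue check joins copies of one node, while every other check stays inside one copy.\<close>

lemma glue_check_not_on_short_cycle: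
  assumes c: "c = glue_check n w"
    and e: "(a, c) \<in> E'" "(b, c) \<in> E'" "(b, c') \<in> E'" "(x, c') \<in> E'" "(x, c'') \<in> E'" "(a, c'') \<in> E'"
    and ne: "c' \<noteq> c" "c'' \<noteq> c"
  shows "a = b"
proof -
  obtain ta tb where a: "a = copy ta w" and b: "b = copy tb w"
    using lifted_edge_glueD e(1,2) c by blast
  have "c' \<notin> range (glue_check n)" "c'' \<notin> range (glue_check n)"
    using lifted_glue_check_unique e ne c by blast+
  then have "copy_index b = copy_index x" "copy_index a = copy_index x"
    using lifted_copy_check_same_copy e(3-6) by metis+
  then show "a = b" using a b by simp
qed

lemma no_4cycle_lift:
  assumes "no_4cycle E" shows "no_4cycle E'"
  unfolding no_4cycle_def
proof (intro notI, elim exE conjE)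
  fix v1 v2 c1 c2
  assume ne: "v1 \<noteq> v2" "c1 \<noteq> c2" and "{(v1, c1), (v2, c1), (v1, c2), (v2, c2)} \<subseteq> E'"
  then have e: "(v1, c1) \<in> E'" "(v2, c1) \<in> E'" "(v1, c2) \<in> E'" "(v2, c2) \<in> E'"
    by simp_all
  have nc: "c1 \<notin> range (glue_check n)" "c2 \<notin> range (glue_check n)"
    using glue_check_not_on_short_cycle[of c1 _ v1 v2 c2 v1 c2]
      glue_check_not_on_short_cycle[of c2 _ v1 v2 c1 v1 c1] e ne by blast+
  obtain t u1 d1 where 1: "v1 = copy t u1" "c1 = copy t d1" "(u1, d1) \<in> E"
    using lifted_edge_copyD[OF e(1) nc(1)] by blast
  obtain u2 where 2: "v2 = copy t u2" "(u2, d1) \<in> E"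
    using lifted_edge_to_copy e(2) nc(1) 1 by blast
  obtain d2 where 3: "c2 = copy t d2" "(u1, d2) \<in> E"
    using lifted_edge_from_copy e(3) nc(2) 1 by blast
  have "(u2, d2) \<in> E" using lifted_copy_edge_iff e(4) nc(2) 2 3 by blast
  moreover have "u1 \<noteq> u2" "d1 \<noteq> d2" using ne 1 2 3 by auto
  ultimately show False using assms 1 2 3 unfolding no_4cycle_def by blast
qed

lemma no_6cycle_lift:
  assumes "no_6cycle E" shows "no_6cycle E'"
  unfolding no_6cycle_def
proof (intro notI, elim exE conjE)
  fix v1 v2 v3 c1 c2 c3
  assume ne: "distinct [v1, v2, v3]" "distinct [c1, c2, c3]"
    and "{(v1, c1), (v2, c1), (v2, c2), (v3, c2), (v3, c3), (v1, c3)} \<subseteq> E'"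
  then have e: "(v1, c1) \<in> E'" "(v2, c1) \<in> E'" "(v2, c2) \<in> E'" "(v3, c2) \<in> E'"
      "(v3, c3) \<in> E'" "(v1, c3) \<in> E'"
    by simp_all
  have nc: "c1 \<notin> range (glue_check n)" "c2 \<notin> range (glue_check n)" "c3 \<notin> range (glue_check n)"
    using glue_check_not_on_short_cycle[of c1 _ v1 v2 c2 v3 c3]
      glue_check_not_on_short_cycle[of c2 _ v2 v3 c3 v1 c1]
      glue_check_not_on_short_cycle[of c3 _ v3 v1 c1 v2 c2] e ne by auto
  obtain t u1 d1 where 1: "v1 = copy t u1" "c1 = copy t d1" "(u1, d1) \<in> E"
    using lifted_edge_copyD[OF e(1) nc(1)] by blast
  obtain u2 where 2: "v2 = copy t u2" "(u2, d1) \<in> E"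
    using lifted_edge_to_copy e(2) nc(1) 1 by blast
  obtain d2 where 3: "c2 = copy t d2" "(u2, d2) \<in> E"
    using lifted_edge_from_copy e(3) nc(2) 2 by blast
  obtain u3 where 4: "v3 = copy t u3" "(u3, d2) \<in> E"
    using lifted_edge_to_copy e(4) nc(2) 3 by blast
  obtain d3 where 5: "c3 = copy t d3" "(u3, d3) \<in> E"
    using lifted_edge_from_copy e(5) nc(3) 4 by blast
  have "(u1, d3) \<in> E" using lifted_copy_edge_iff e(6) nc(3) 1 5 by blast
  moreover have "distinct [u1, u2, u3]" "distinct [d1, d2, d3]" using ne 1 2 3 4 5 by auto
  ultimately show False using assms 1 2 3 4 5 unfolding no_6cycle_def by blast
qed

lemma badj_lift:
  assumes "t \<in> {1..wr}" "badj (V, C, E) x y"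
  shows "badj (V', C', E') (map_sum (copy t) (copy t) x) (map_sum (copy t) (copy t) y)"
  using assms lifted_copy_edge copy_in_lifted_vars_iff copy_check_in_lifted_checks
  by (cases x; cases y) auto

lemma neighbours_copy_check:
  assumes "d \<in> C" "t \<in> {1..wr}"
  shows "{w \<in> S. (w, copy t d) \<in> E'} = copy t ` {v \<in> copy t -` S. (v, d) \<in> E}"
proof -
  have nr: "copy t d \<notin> range (glue_check n)" using copy_ne_glue_check[OF assms(1)] by blast
  show ?thesis
  proof (intro set_eqI iffI)
    fix w assume "w \<in> {w \<in> S. (w, copy t d) \<in> E'}"
    then have "w \<in> S" "(w, copy t d) \<in> E'" by simp_all
    then show "w \<in> copy t ` {v \<in> copy t -` S. (v, d) \<in> E}"
      using lifted_edge_to_copy[OF _ nr] by blast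
  next
    fix w assume "w \<in> copy t ` {v \<in> copy t -` S. (v, d) \<in> E}"
    then obtain u where "w = copy t u" "copy t u \<in> S" "(u, d) \<in> E" by auto
    then show "w \<in> {w \<in> S. (w, copy t d) \<in> E'}"
      using lifted_copy_edge_iff[OF nr] assms(2) by blast
  qed
qed

lemma codeword_vimage_copy:
  assumes S: "is_codeword (V', C', E') S" and t: "t \<in> {1..wr}"
  shows "is_codeword (V, C, E) (copy t -` S)"
  unfolding is_codeword_iff
proof
  have "S \<subseteq> V'" using S by (simp add: is_codeword_iff)
  then show "copy t -` S \<subseteq> V" using copy_in_lifted_vars_iff by blast
  show "\<forall>d\<in>C. even (card {v \<in> copy t -` S. (v, d) \<in> E})"
  proof
    fix d assume "d \<in> C"
    then have "even (card {w \<in> S. (w, copy t d) \<in> E'})"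
      using S t copy_check_in_lifted_checks by (simp add: is_codeword_iff)
    then show "even (card {v \<in> copy t -` S. (v, d) \<in> E})"
      using neighbours_copy_check[OF \<open>d \<in> C\<close> t] by (simp del: image_vimage_eq)
  qed
qed

lemma neighbours_glue_check_two_copies:
  assumes "u \<in> V" "last_layer u" "2 \<le> wr"
  shows "{w \<in> copy 1 ` T \<union> copy 2 ` T. (w, glue_check n u) \<in> E'} =
    (if u \<in> T then {copy 1 u, copy 2 u} else {})"
proof (intro set_eqI iffI)
  fix w assume w: "w \<in> {w \<in> copy 1 ` T \<union> copy 2 ` T. (w, glue_check n u) \<in> E'}"
  then obtain t where "w = copy t u" using lifted_edge_glueD by blast
  with w show "w \<in> (if u \<in> T then {copy 1 u, copy 2 u} else {})" by auto
next
  fix w assume "w \<in> (if u \<in> T then {copy 1 u, copy 2 u} else {})"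
  then have "u \<in> T" "w = copy 1 u \<or> w = copy 2 u" by (auto split: if_splits)
  then show "w \<in> {w \<in> copy 1 ` T \<union> copy 2 ` T. (w, glue_check n u) \<in> E'}"
    using lifted_glue_edge[OF _ assms(1,2)] assms(3) by auto
qed

lemma codeword_two_copies:
  assumes T: "is_codeword (V, C, E) T" and wr: "2 \<le> wr"
  shows "is_codeword (V', C', E') (copy 1 ` T \<union> copy 2 ` T)"
  unfolding is_codeword_iff
proof
  let ?T = "copy 1 ` T \<union> copy 2 ` T"
  have "T \<subseteq> V" using T by (simp add: is_codeword_iff)
  then show "?T \<subseteq> V'" using wr by (auto simp: copy_in_lifted_vars_iff)
  show "\<forall>c\<in>C'. even (card {w \<in> ?T. (w, c) \<in> E'})"
  proof
    fix c assume "c \<in> C'"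
    then consider (copied) t d where "t \<in> {1..wr}" "d \<in> C" "c = copy t d"
      | (glued) u where "u \<in> V" "last_layer u" "c = glue_check n u"
      by (auto simp: C'_def)
    then show "even (card {w \<in> ?T. (w, c) \<in> E'})"
    proof cases
      case copied
      have N: "{w \<in> ?T. (w, c) \<in> E'} = copy t ` {v \<in> copy t -` ?T. (v, d) \<in> E}"
        unfolding copied(3) by (rule neighbours_copy_check[OF copied(2,1)])
      show ?thesis
      proof (cases "t \<in> {1, 2}")
        case True
        then have "copy t -` ?T = T" by auto
        moreover have "even (card {v \<in> T. (v, d) \<in> E})"
          using T copied(2) by (simp add: is_codeword_iff)
        ultimately show ?thesis unfolding N by simp
      next
        case False
        then have "copy t -` ?T = {}" by auto
        then show ?thesis unfolding N by simp
      qed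
    next
      case glued
      then show ?thesis using neighbours_glue_check_two_copies[OF glued(1,2) wr] by simp
    qed
  qed
qed

lemma codeword_weight_lift:
  assumes IH: "\<And>T. is_codeword (V, C, E) T \<Longrightarrow> T \<noteq> {} \<Longrightarrow> d \<le> card T \<and> (\<exists>v\<in>T. last_layer v)"
    and S: "is_codeword (V', C', E') S" "S \<noteq> {}"
  shows "2 * d \<le> card S \<and> (\<exists>v\<in>S. last_layer v)"
proof -
  have SV: "S \<subseteq> V'" using S(1) by (simp add: is_codeword_iff)
  then obtain t v0 where t: "t \<in> {1..wr}" and "copy t v0 \<in> S"
    using S(2) lifted_varsE by (metis all_not_in_conv subsetD)
  let ?T = "copy t -` S"
  have T: "is_codeword (V, C, E) ?T" "?T \<noteq> {}"
    using codeword_vimage_copy[OF S(1) t] \<open>copy t v0 \<in> S\<close> by auto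
  then obtain u where u: "copy t u \<in> S" "last_layer u" and dT: "d \<le> card ?T"
    using IH by blast
  have "u \<in> V" using T(1) u(1) by (auto simp: is_codeword_iff)
  obtain w where w: "w \<in> S" "w \<noteq> copy t u" "(w, glue_check n u) \<in> E'"
    using codeword_other_neighbour[OF S(1) finite_lifted_vars
        glue_check_in_lifted_checks[OF \<open>u \<in> V\<close> u(2)] u(1)
        lifted_glue_edge[OF t \<open>u \<in> V\<close> u(2)]] .
  obtain t' where w': "w = copy t' u" using lifted_edge_glueD w(3) by blast
  have t': "t' \<in> {1..wr}" using w(1) SV copy_in_lifted_vars_iff w' by blast
  let ?T' = "copy t' -` S"
  have dT': "d \<le> card ?T'"
    using IH codeword_vimage_copy[OF S(1) t'] w(1) w' by blast
  have fin: "finite ?T" "finite ?T'"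
    using codeword_vimage_copy[OF S(1) t] codeword_vimage_copy[OF S(1) t'] finite_V finite_subset
    by (auto simp: is_codeword_iff)
  have "t' \<noteq> t" using w(2) w' by blast
  then have "card ?T + card ?T' = card (copy t ` ?T \<union> copy t' ` ?T')"
    using fin by (simp only: card_copy_images)
  also have "\<dots> \<le> card S"
    by (rule card_mono[OF finite_subset[OF SV finite_lifted_vars]]) auto
  finally have "2 * d \<le> card S" using dT dT' by linarith
  moreover have "last_layer (copy t u)" using u(2) by simp
  ultimately show ?thesis using u(1) by blast
qed

end

section \<open>The base graph\<close>

lemma G0_vars:
  "fst (G0 wc wr) = {([], i, j) | i j. 1 \<le> i \<and> i \<le> wr \<and> j \<le> (wc - 1) * (wr - 1)}"
  by (simp add: G0_def Let_def)

lemma finite_G0_vars: "finite (fst (G0 wc wr))"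
proof (rule finite_subset)
  show "fst (G0 wc wr) \<subseteq> (\<lambda>(i, j). ([], i, j)) ` ({1..wr} \<times> {0..(wc - 1) * (wr - 1)})"
    by (auto simp: G0_vars)
qed simp

lemma G0_edges_subset: "snd (snd (G0 wc wr)) \<subseteq> fst (G0 wc wr) \<times> fst (snd (G0 wc wr))"
proof -
  have "j \<le> (wc - 1) * (wr - 1)" if "k \<le> wc - 1" "j \<le> k * (wr - 1)" for j k :: nat
    using that mult_le_mono1 order_trans by blast
  then show ?thesis by (auto simp: G0_def Let_def)
qed

(* The k such that the last-layer node v_{i,j} lies below the k-th child check of v_{i,0}. *)
definition child_block :: "nat \<Rightarrow> nat \<Rightarrow> nat" where
  "child_block wr j = (j - 1) div (wr - 1) + 1"

lemma block_iff_div: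
  fixes j k m :: nat
  assumes "0 < m" "1 \<le> j"
  shows "(k - 1) * m + 1 \<le> j \<and> j \<le> k * m \<longleftrightarrow> k = (j - 1) div m + 1"
proof
  assume k: "(k - 1) * m + 1 \<le> j \<and> j \<le> k * m"
  then have "k \<noteq> 0" using assms by (cases k) auto
  then have "(j - 1) div m = k - 1"
    using k by (intro div_nat_eqI) (auto simp: algebra_simps)
  then show "k = (j - 1) div m + 1" using \<open>k \<noteq> 0\<close> by simp
next
  assume k: "k = (j - 1) div m + 1"
  let ?q = "(j - 1) div m" and ?r = "(j - 1) mod m"
  have "?q * m + ?r = j - 1" by (rule div_mult_mod_eq)
  moreover have "?r < m" using assms(1) by simp
  moreover have "(k - 1) * m = ?q * m" "k * m = ?q * m + m" using k by simp_all
  ultimately show "(k - 1) * m + 1 \<le> j \<and> j \<le> k * m" using assms(2) by linarith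
qed

lemma child_block_le:
  assumes "2 \<le> wr" "j \<le> (wc - 1) * (wr - 1)" "1 \<le> j"
  shows "child_block wr j \<le> wc - 1"
proof -
  have "(j - 1) div (wr - 1) < wc - 1"
    using assms by (intro less_mult_imp_div_less) auto
  then show ?thesis by (simp add: child_block_def)
qed

lemma G0_edge_iff:
  assumes wr: "2 \<le> wr"
  shows "((cs, i, j), (ds, \<kappa>)) \<in> snd (snd (G0 wc wr)) \<longleftrightarrow>
    cs = [] \<and> ds = [] \<and> 1 \<le> i \<and> i \<le> wr \<and> j \<le> (wc - 1) * (wr - 1) \<and>
    (if j = 0 then \<kappa> = Root \<or> (\<exists>k. 1 \<le> k \<and> k \<le> wc - 1 \<and> \<kappa> = Child i k)
     else \<kappa> = Child i (child_block wr j) \<or> \<kappa> = CJ j)"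
proof -
  have block: "(k - 1) * (wr - 1) + 1 \<le> j \<and> j \<le> k * (wr - 1) \<longleftrightarrow> k = child_block wr j"
    if "1 \<le> j" for j k
    using block_iff_div[of "wr - 1" j k] wr that by (simp add: child_block_def)
  have "j \<le> (wc - 1) * (wr - 1)" if "k \<le> wc - 1" "j \<le> k * (wr - 1)" for j k :: nat
    using that mult_le_mono1 order_trans by blast
  moreover have "1 \<le> child_block wr j" for j by (simp add: child_block_def)
  moreover have "j \<le> child_block wr j * (wr - 1)" if "1 \<le> j" for j
    using block[OF that, of "child_block wr j"] by simp
  ultimately show ?thesis
    using block child_block_le[OF wr]
    by (auto simp: G0_def Let_def)
qed

lemma G0_Child_neighbour:
  "G0 wc wr = (V, C, E) \<Longrightarrow> (y, (ds, Child i k)) \<in> E \<Longrightarrow> \<exists>j. y = ([], i, j)"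
  by (auto simp: G0_def Let_def)

lemma G0_CJ_neighbour:
  "G0 wc wr = (V, C, E) \<Longrightarrow> (y, (ds, CJ j)) \<in> E \<Longrightarrow> \<exists>i. y = ([], i, j)"
  by (auto simp: G0_def Let_def)

lemma G0_no_4cycle: "2 \<le> wr \<Longrightarrow> no_4cycle (snd (snd (G0 wc wr)))"
  unfolding no_4cycle_def split_paired_Ex insert_subset
  by (auto simp: G0_edge_iff split: if_splits)

lemma G0_no_6cycle: "2 \<le> wr \<Longrightarrow> no_6cycle (snd (snd (G0 wc wr)))"
  unfolding no_6cycle_def split_paired_Ex insert_subset
  by (auto simp: G0_edge_iff split: if_splits)

lemma G0_8cycle:
  assumes wc: "2 \<le> wc" and wr: "2 \<le> wr"
  shows "is_cycle (G0 wc wr) [Inl ([], 1, 0), Inr ([], Child 1 1), Inl ([], 1, 1), Inr ([], CJ 1),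
    Inl ([], 2, 1), Inr ([], Child 2 1), Inl ([], 2, 0), Inr ([], Root)]" (is "is_cycle _ ?xs")
proof -
  obtain V C E where G: "G0 wc wr = (V, C, E)" by (cases "G0 wc wr")
  have sub: "E \<subseteq> V \<times> C" using G0_edges_subset[of wc wr] G by simp
  have k: "1 \<le> wc - 1" using wc by linarith
  have "1 \<le> wr - 1" using wr by linarith
  with k have L: "1 \<le> (wc - 1) * (wr - 1)" by simp
  have "child_block wr 1 = 1" by (simp add: child_block_def)
  then have "(([], 1, 0), ([], Child 1 1)) \<in> E" "(([], 1, 1), ([], Child 1 1)) \<in> E"
    "(([], 1, 1), ([], CJ 1)) \<in> E" "(([], 2, 1), ([], CJ 1)) \<in> E"
    "(([], 2, 1), ([], Child 2 1)) \<in> E" "(([], 2, 0), ([], Child 2 1)) \<in> E"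
    "(([], 2, 0), ([], Root)) \<in> E" "(([], 1, 0), ([], Root)) \<in> E"
    using k L by (simp_all add: G0_edge_iff[OF wr, where wc = wc, unfolded G snd_conv])
  note edges = this
  have adj: "badj (V, C, E) (Inl v) (Inr c)" "badj (V, C, E) (Inr c) (Inl v)" if "(v, c) \<in> E" for v c
    using that sub by auto
  have "badj (V, C, E) (?xs ! i) (?xs ! ((i + 1) mod 8))" if "i < 8" for i
  proof -
    have "i = 0 \<or> i = 1 \<or> i = 2 \<or> i = 3 \<or> i = 4 \<or> i = 5 \<or> i = 6 \<or> i = 7" using that by arith
    then show ?thesis by (elim disjE) (simp_all del: badj.simps add: adj edges[simplified])
  qed
  then show ?thesis using G by (simp add: is_cycle_def)
qed

lemma G0_codeword_var:
  "G0 wc wr = (V, C, E) \<Longrightarrow> is_codeword (V, C, E) S \<Longrightarrow> (cs, i, j) \<in> S \<Longrightarrow>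
    cs = [] \<and> 1 \<le> i \<and> i \<le> wr \<and> j \<le> (wc - 1) * (wr - 1)"
  using G0_vars[of wc wr] by (auto simp: is_codeword_iff)

lemma G0_codeword_other_neighbour:
  assumes "G0 wc wr = (V, C, E)" "is_codeword (V, C, E) S" "x \<in> S" "(x, c) \<in> E"
  obtains y where "y \<in> S" "y \<noteq> x" "(y, c) \<in> E"
proof (rule codeword_other_neighbour[OF assms(2) _ _ assms(3,4)])
  show "finite V" using finite_G0_vars[of wc wr] assms(1) by simp
  show "c \<in> C" using G0_edges_subset[of wc wr] assms(1,4) by auto
qed

lemma G0_codeword_meets_last_layer:
  assumes wc: "2 \<le> wc" and wr: "2 \<le> wr" and G: "G0 wc wr = (V, C, E)"
    and S: "is_codeword (V, C, E) S" "S \<noteq> {}"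
  obtains i j where "([], i, j) \<in> S" "1 \<le> j"
proof -
  obtain cs i j where x: "(cs, i, j) \<in> S" using S(2) by (metis all_not_in_conv prod_cases3)
  note x' = G0_codeword_var[OF G S(1) x]
  show ?thesis
  proof (cases "j = 0")
    case True
    then have "(([], i, j), ([], Child i 1)) \<in> E"
      using x' wc G0_edge_iff[OF wr, where wc = wc, unfolded G snd_conv] by auto
    then obtain y where y: "y \<in> S" "y \<noteq> ([], i, j)" "(y, ([], Child i 1)) \<in> E"
      using G0_codeword_other_neighbour[OF G S(1)] x x' by metis
    then obtain j' where "y = ([], i, j')" using G0_Child_neighbour[OF G] by blast
    with y True show ?thesis using that by auto
  qed (use x x' that in auto)
qed

lemma G0_codeword_weight:
  assumes wc: "2 \<le> wc" and wr: "2 \<le> wr" and S: "is_codeword (G0 wc wr) S" "S \<noteq> {}"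
  shows "4 \<le> card S \<and> (\<exists>v\<in>S. last_layer v)"
proof -
  obtain V C E where G: "G0 wc wr = (V, C, E)" by (cases "G0 wc wr")
  note edge = G0_edge_iff[OF wr, where wc = wc, unfolded G snd_conv]
  note other = G0_codeword_other_neighbour[OF G S(1)[unfolded G]]
  obtain i j where a: "([], i, j) \<in> S" "1 \<le> j"
    using G0_codeword_meets_last_layer[OF wc wr G S[unfolded G]] .
  note a' = G0_codeword_var[OF G S(1)[unfolded G] a(1)]
  let ?k = "child_block wr j"
  have "(([], i, j), ([], CJ j)) \<in> E" "(([], i, j), ([], Child i ?k)) \<in> E"
    using a a' edge by auto
  then obtain b w1 where b: "b \<in> S" "b \<noteq> ([], i, j)" "(b, ([], CJ j)) \<in> E"
    and w1: "w1 \<in> S" "w1 \<noteq> ([], i, j)" "(w1, ([], Child i ?k)) \<in> E"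
    using other[OF a(1)] by metis
  obtain i' where b': "b = ([], i', j)" "i' \<noteq> i" using G0_CJ_neighbour[OF G] b by blast
  obtain j1 where "w1 = ([], i, j1)" using G0_Child_neighbour[OF G] w1(3) by blast
  have "(b, ([], Child i' ?k)) \<in> E"
    using G0_codeword_var[OF G S(1)[unfolded G]] b b' a' edge by auto
  then obtain w2 where w2: "w2 \<in> S" "w2 \<noteq> b" "(w2, ([], Child i' ?k)) \<in> E"
    using other[OF b(1)] by metis
  obtain j2 where "w2 = ([], i', j2)" using G0_Child_neighbour[OF G] w2(3) by blast
  have "card {([], i, j), b, w1, w2} = 4"
    using b' w1 w2 \<open>w1 = _\<close> \<open>w2 = _\<close> by auto
  moreover have "{([], i, j), b, w1, w2} \<subseteq> S" using a b w1 w2 by auto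
  moreover have "finite S"
    using S(1) finite_G0_vars[of wc wr] finite_subset by (auto simp: is_codeword_def)
  ultimately have "4 \<le> card S" by (metis card_mono)
  moreover have "last_layer ([], i, j)" using a(2) by (simp add: last_layer_def)
  ultimately show ?thesis using a(1) by blast
qed

lemma G0_codeword_of_weight_4:
  assumes wc: "2 \<le> wc" and wcr: "wc \<le> wr"
  obtains T where "is_codeword (G0 wc wr) T" "card T = 4"
proof -
  obtain V C E where G: "G0 wc wr = (V, C, E)" by (cases "G0 wc wr")
  have wr: "2 \<le> wr" using wc wcr by simp
  note edge = G0_edge_iff[OF wr, where wc = wc, unfolded G snd_conv]
  have "1 \<le> wc - 1" using wc by simp
  then have L: "wr - 1 \<le> (wc - 1) * (wr - 1)" by (metis mult_1 mult_le_mono1)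
  (* For wr = 2 the grid is v_{a,0}, v_{a,1} with columns Root and CJ 1, otherwise it is
     v_{a,1}, v_{a,2} with columns CJ 1 and CJ 2; in both cases the rows are Child a 1. *)
  obtain g :: "nat \<times> nat \<Rightarrow> vnode" and row col :: "nat \<Rightarrow> cnode" where
    g: "inj_on g ({1, 2} \<times> {1, 2})" "g ` ({1, 2} \<times> {1, 2}) \<subseteq> V"
    and rc: "inj_on row {1, 2}" "inj_on col {1, 2}" "row ` {1, 2} \<inter> col ` {1, 2} = {}"
    and adj: "\<And>a b c. a \<in> {1, 2} \<Longrightarrow> b \<in> {1, 2} \<Longrightarrow> (g (a, b), c) \<in> E \<longleftrightarrow> c = row a \<or> c = col b"
  proof (cases "wr = 2")
    case True
    then have "wc = 2" using wc wcr by simp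
    show ?thesis
    proof (rule that[of "\<lambda>(a, b). ([], a, b - 1)" "\<lambda>a. ([], Child a 1)"
        "\<lambda>b. ([], if b = 1 then Root else CJ 1)"])
      show "((\<lambda>(a, b). ([], a, b - 1)) (a, b), c) \<in> E \<longleftrightarrow>
          c = ([], Child a 1) \<or> c = ([], if b = 1 then Root else CJ 1)" if "a \<in> {1, 2}" "b \<in> {1, 2}" for a b c
        using that edge \<open>wc = 2\<close> True by (cases c) (auto simp: child_block_def)
    qed (use G G0_vars[of wc wr] True \<open>wc = 2\<close> in \<open>auto simp: inj_on_def\<close>)
  next
    case False
    then have "3 \<le> wr" using wr by simp
    then have L2: "2 \<le> (wc - 1) * (wr - 1)" using L by linarith
    show ?thesis
    proof (rule that[of "\<lambda>(a, b). ([], a, b)" "\<lambda>a. ([], Child a 1)" "\<lambda>b. ([], CJ b)"])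
      have "child_block wr b = 1" if "b \<in> {1, 2}" for b
        using that \<open>3 \<le> wr\<close> by (auto simp: child_block_def)
      then show "((\<lambda>(a, b). ([], a, b)) (a, b), c) \<in> E \<longleftrightarrow> c = ([], Child a 1) \<or> c = ([], CJ b)"
        if "a \<in> {1, 2}" "b \<in> {1, 2}" for a b c
        using that edge L2 wc \<open>3 \<le> wr\<close> by (cases c) auto
    qed (use G G0_vars[of wc wr] L2 \<open>3 \<le> wr\<close> in \<open>auto simp: inj_on_def\<close>)
  qed
  let ?T = "g ` ({1, 2} \<times> {1, 2})"
  have "is_codeword (V, C, E) ?T"
    using g(2) even_card_grid_neighbours[OF _ _ g(1) rc adj] by (simp add: is_codeword_iff)
  moreover have "card ?T = 4" using card_image[OF g(1)] by (simp add: card_cartesian_product)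
  ultimately show ?thesis using that G by simp
qed

section \<open>The stages of the construction\<close>

lemma lift_step_Gs: "Gs wc wr s = (V, C, E) \<Longrightarrow> lift_step (Suc s) V C E"
proof (induction s arbitrary: V C E)
  case 0
  then have G: "G0 wc wr = (V, C, E)" by simp
  have "finite V" using G finite_G0_vars[of wc wr] by simp
  moreover have "E \<subseteq> V \<times> C" using G G0_edges_subset[of wc wr] by simp
  moreover have "(ds, Glue m i j) \<notin> C" for ds m i j using G by (auto simp: G0_def Let_def)
  ultimately show ?case by unfold_locales auto
next
  case (Suc s)
  obtain V0 C0 E0 where G: "Gs wc wr s = (V0, C0, E0)" by (cases "Gs wc wr s")
  interpret lift_step wr "Suc s" V0 C0 E0 using Suc.IH[OF G] .
  have "(V, C, E) = (V', C', E')" using Suc.prems G Gs_Suc_lift[of wc wr s] lift_eq by simp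
  then show ?case
    using finite_lifted_vars lifted_edges_subset lifted_glue_tags by unfold_locales fastforce+
qed

lemma Gs_no_short_cycles:
  assumes "2 \<le> wr"
  shows "no_4cycle (snd (snd (Gs wc wr s))) \<and> no_6cycle (snd (snd (Gs wc wr s)))"
proof (induction s)
  case 0
  then show ?case using G0_no_4cycle[OF assms] G0_no_6cycle[OF assms] by simp
next
  case (Suc s)
  obtain V C E where G: "Gs wc wr s = (V, C, E)" by (cases "Gs wc wr s")
  interpret lift_step wr "Suc s" V C E using lift_step_Gs[OF G] .
  have "Gs wc wr (Suc s) = (V', C', E')" by (simp only: Gs_Suc_lift G lift_eq)
  then show ?case using Suc.IH no_4cycle_lift no_6cycle_lift G by simp
qed

lemma Gs_8cycle:
  assumes "2 \<le> wc" "2 \<le> wr"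
  shows "\<exists>xs. is_cycle (Gs wc wr s) xs \<and> length xs = 8"
proof (induction s)
  case 0
  then show ?case using G0_8cycle[OF assms] by fastforce
next
  case (Suc s)
  then obtain xs where xs: "is_cycle (Gs wc wr s) xs" "length xs = 8" by blast
  obtain V C E where G: "Gs wc wr s = (V, C, E)" by (cases "Gs wc wr s")
  interpret lift_step wr "Suc s" V C E using lift_step_Gs[OF G] .
  have "inj (map_sum (copy 1) (copy 1))" by (rule sum.inj_map) (simp_all add: inj_def)
  moreover have "badj (V', C', E') (map_sum (copy 1) (copy 1) x) (map_sum (copy 1) (copy 1) y)"
    if "badj (V, C, E) x y" for x y
    using that assms(2) by (intro badj_lift) auto
  ultimately have "is_cycle (V', C', E') (map (map_sum (copy 1) (copy 1)) xs)"
    using is_cycle_map xs(1) G by metis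
  moreover have "Gs wc wr (Suc s) = (V', C', E')" by (simp only: Gs_Suc_lift G lift_eq)
  ultimately show ?case using xs(2) by (metis length_map)
qed

lemma Gs_codeword_weight:
  assumes "2 \<le> wc" "2 \<le> wr"
  shows "is_codeword (Gs wc wr s) S \<Longrightarrow> S \<noteq> {} \<Longrightarrow>
    2 ^ (s + 2) \<le> card S \<and> (\<exists>v\<in>S. last_layer v)"
proof (induction s arbitrary: S)
  case 0
  then show ?case using G0_codeword_weight[OF assms] by simp
next
  case (Suc s)
  obtain V C E where G: "Gs wc wr s = (V, C, E)" by (cases "Gs wc wr s")
  interpret lift_step wr "Suc s" V C E using lift_step_Gs[OF G] .
  have GS: "Gs wc wr (Suc s) = (V', C', E')" by (simp only: Gs_Suc_lift G lift_eq)
  have "2 * 2 ^ (s + 2) \<le> card S \<and> (\<exists>v\<in>S. last_layer v)"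
    by (rule codeword_weight_lift[OF Suc.IH[unfolded G]]) (use Suc.prems GS in simp_all)
  moreover have "2 ^ (Suc s + 2) = 2 * (2::nat) ^ (s + 2)" by simp
  ultimately show ?case by (simp only:)
qed

lemma Gs_codeword_of_weight:
  assumes "2 \<le> wc" "wc \<le> wr"
  shows "\<exists>T. is_codeword (Gs wc wr s) T \<and> card T = 2 ^ (s + 2)"
proof (induction s)
  case 0
  obtain T where "is_codeword (G0 wc wr) T" "card T = 4" using G0_codeword_of_weight_4[OF assms] .
  then show ?case by auto
next
  case (Suc s)
  then obtain T where T: "is_codeword (Gs wc wr s) T" "card T = 2 ^ (s + 2)" by blast
  obtain V C E where G: "Gs wc wr s = (V, C, E)" by (cases "Gs wc wr s")
  interpret lift_step wr "Suc s" V C E using lift_step_Gs[OF G] .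
  have GS: "Gs wc wr (Suc s) = (V', C', E')" by (simp only: Gs_Suc_lift G lift_eq)
  have "finite T" using T(1) G finite_V finite_subset by (auto simp: is_codeword_iff)
  then have "card (copy 1 ` T \<union> copy 2 ` T) = 2 ^ (Suc s + 2)"
    using card_copy_images[of T T 1 2] T(2) by simp
  moreover have "is_codeword (V', C', E') (copy 1 ` T \<union> copy 2 ` T)"
    using codeword_two_copies T(1) G assms by simp
  ultimately show ?case unfolding GS by blast
qed

theorem proposition2:
  fixes wc wr :: nat
  assumes "2 \<le> wc" and "wc \<le> wr"
  shows "girth (Hreg wc wr) = 8 \<and> dmin (Hreg wc wr) = 2 ^ wc"
proof
  have wr: "2 \<le> wr" using assms by simp
  have wc: "wc - 2 + 2 = wc" using assms(1) by simp
  obtain V C E where G: "Hreg wc wr = (V, C, E)" by (cases "Hreg wc wr")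
  have "no_4cycle E" "no_6cycle E"
    using Gs_no_short_cycles[OF wr, of wc "wc - 2"] G by (simp_all add: Hreg_def)
  then have "\<And>xs. is_cycle (Hreg wc wr) xs \<Longrightarrow> 8 \<le> length xs" using cycle_length_ge_8 G by metis
  moreover obtain xs where "is_cycle (Hreg wc wr) xs" "length xs = 8"
    using Gs_8cycle[OF assms(1) wr] by (auto simp: Hreg_def)
  ultimately have "girth (Hreg wc wr) = enat 8" by (rule girth_eqI)
  then show "girth (Hreg wc wr) = 8" by (simp add: numeral_eq_enat)
  obtain T where "is_codeword (Hreg wc wr) T" "card T = 2 ^ wc"
    using Gs_codeword_of_weight[OF assms, of "wc - 2", unfolded wc] by (auto simp: Hreg_def)
  moreover have "\<And>S. is_codeword (Hreg wc wr) S \<Longrightarrow> S \<noteq> {} \<Longrightarrow> 2 ^ wc \<le> card S"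
    using Gs_codeword_weight[OF assms(1) wr, of "wc - 2", unfolded wc] by (auto simp: Hreg_def)
  ultimately have "dmin (Hreg wc wr) = enat (2 ^ wc)" by (intro dmin_eqI) auto
  then show "dmin (Hreg wc wr) = 2 ^ wc" by (metis of_nat_eq_enat of_nat_numeral of_nat_power)
qed

end
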